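(* Assume the graph $(\overline{\mathbb V},\overline E)$ is connected. Let $\sigma$ be a uniform random bijection from $\{1,\dots,|\overline E|\}$ to $\overline E$, and let $\eta^*$ be the configuration produced by the perfect simulation procedure described in the context. Then the law of $\eta^*$ is the unique invariant measure of the spiking disagreement process $\eta(t)$.
   Context: Graph: finite oriented graph $(\overline{\mathbb V},\overline E)$ with internal vertices $\mathbb V$, boundary vertices $\partial\mathbb V$; $E$ = edges with both endpoints in $\mathbb V$, $\partial E$ = edges with one endpoint in $\partial\mathbb V$ (written $ij$ with $j\in\partial\mathbb V$); no edges between boundary vertices. Two edges are neighbors if they share exactly one vertex. Spiking disagreement process: Markov process on $\mathcal E_n:=\{\eta\in\{0,1\}^{\overline E}:\eta_{ij}=1\ \forall ij\in\partial E,\ \text{and }\eta_{ij}+\eta_{k\ell}>0\text{ whenever }ij,k\ell\in E\text{ share exactly one vertex}\}$ with generator $L^\eta f(\eta)=\sum_{ij\in\overline E}\eta_{ij}[f(H_{ij}\eta)-f(\eta)]$, where $(H_{ij}\eta)_{k\ell}=0$ if $k\ell=ij$ and $j\in\mathbb V$; $(H_{ij}\eta)_{k\ell}=1$ if $|\{k,\ell\}\cap\{i,j\}|=1$; and $(H_{ij}\eta)_{k\ell}=\eta_{k\ell}$ otherwise. (It is the indicator process $\eta_{ij}(t)=\mathbf 1\{O_i(t)\neq O_j(t)\}$ of disagreement edges of the opinion process.) Perfect simulation: set $\eta_{ij}[0]=0$ for $ij\in E$, $\eta_{ij}[0]=1$ for $ij\in\partial E$, and $E[0]=\partial E$. For $n\ge0$: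 $\eta_{ij}[n+1]=\eta_{ij}[n]+\mathbf 1\{ij\notin E[n]\text{ and }ij\text{ is a neighbor of }\sigma(n+1)\}$ and $E[n+1]=E[n]\cup\{\sigma(n+1)\}\cup\{\text{neighbors of }\sigma(n+1)\}$. $\eta^*:=\eta[n]$ for the first $n$ with $E[n]=\overline E$. *)

theory Defs
  imports "HOL-Probability.Probability"
begin

text \<open>Vertices have type 'v; V = internal vertices, B = boundary vertices,
  Eb = the oriented edge set (pairs (i,j)).  Configurations are functions
  on edges with values in nat (0/1 on Eb, 0 off Eb).\<close>

definition intE :: "'v set \<Rightarrow> ('v \<times> 'v) set \<Rightarrow> ('v \<times> 'v) set" where
  "intE V Eb = {e \<in> Eb. snd e \<in> V}"

definition bdE :: "'v set \<Rightarrow> ('v \<times> 'v) set \<Rightarrow> ('v \<times> 'v) set" where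
  "bdE B Eb = {e \<in> Eb. snd e \<in> B}"

definition nbr :: "'v \<times> 'v \<Rightarrow> 'v \<times> 'v \<Rightarrow> bool" where
  "nbr e f \<longleftrightarrow> card ({fst e, snd e} \<inter> {fst f, snd f}) = 1"

definition graph_connected :: "'v set \<Rightarrow> ('v \<times> 'v) set \<Rightarrow> bool" where
  "graph_connected W Eb \<longleftrightarrow> (\<forall>u\<in>W. \<forall>v\<in>W. (u, v) \<in> (Eb \<union> Eb\<inverse>)\<^sup>*)"

definition state_space :: "'v set \<Rightarrow> 'v set \<Rightarrow> ('v \<times> 'v) set \<Rightarrow> (('v \<times> 'v) \<Rightarrow> nat) set" where
  "state_space V B Eb = {\<eta>. (\<forall>e. e \<notin> Eb \<longrightarrow> \<eta> e = 0) \<and> (\<forall>e\<in>Eb. \<eta> e \<in> {0, 1})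
      \<and> (\<forall>e\<in>bdE B Eb. \<eta> e = 1)
      \<and> (\<forall>e\<in>intE V Eb. \<forall>f\<in>intE V Eb. nbr e f \<longrightarrow> \<eta> e + \<eta> f > 0)}"

definition spike :: "'v set \<Rightarrow> ('v \<times> 'v) set \<Rightarrow> ('v \<times> 'v) \<Rightarrow> (('v \<times> 'v) \<Rightarrow> nat) \<Rightarrow> (('v \<times> 'v) \<Rightarrow> nat)" where
  "spike V Eb e \<eta> = (\<lambda>f. if f \<in> Eb then
      (if f = e \<and> snd e \<in> V then 0 else if nbr f e then 1 else \<eta> f) else \<eta> f)"

definition generator :: "'v set \<Rightarrow> ('v \<times> 'v) set \<Rightarrow> ((('v \<times> 'v) \<Rightarrow> nat) \<Rightarrow> real)
     \<Rightarrow> (('v \<times> 'v) \<Rightarrow> nat) \<Rightarrow> real" where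
  "generator V Eb f \<eta> = (\<Sum>e\<in>Eb. real (\<eta> e) * (f (spike V Eb e \<eta>) - f \<eta>))"

definition invariant_measure :: "'v set \<Rightarrow> 'v set \<Rightarrow> ('v \<times> 'v) set \<Rightarrow> (('v \<times> 'v) \<Rightarrow> nat) pmf \<Rightarrow> bool" where
  "invariant_measure V B Eb p \<longleftrightarrow> set_pmf p \<subseteq> state_space V B Eb
     \<and> (\<forall>f. measure_pmf.expectation p (generator V Eb f) = 0)"

primrec sim :: "'v set \<Rightarrow> ('v \<times> 'v) set \<Rightarrow> (nat \<Rightarrow> 'v \<times> 'v) \<Rightarrow> nat
     \<Rightarrow> (('v \<times> 'v) \<Rightarrow> nat) \<times> ('v \<times> 'v) set" where
  "sim B Eb \<sigma> 0 = ((\<lambda>e. if e \<in> bdE B Eb then 1 else 0), bdE B Eb)"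
| "sim B Eb \<sigma> (Suc n) =
     (let \<eta> = fst (sim B Eb \<sigma> n); En = snd (sim B Eb \<sigma> n); s = \<sigma> (Suc n) in
      ((\<lambda>e. \<eta> e + (if e \<in> Eb \<and> e \<notin> En \<and> nbr e s then 1 else 0)),
       En \<union> {s} \<union> {e \<in> Eb. nbr e s}))"

definition eta_star :: "'v set \<Rightarrow> ('v \<times> 'v) set \<Rightarrow> (nat \<Rightarrow> 'v \<times> 'v) \<Rightarrow> (('v \<times> 'v) \<Rightarrow> nat)" where
  "eta_star B Eb \<sigma> = fst (sim B Eb \<sigma> (LEAST n. snd (sim B Eb \<sigma> n) = Eb))"

definition orderings :: "('v \<times> 'v) set \<Rightarrow> (nat \<Rightarrow> 'v \<times> 'v) set" where
  "orderings Eb = {\<sigma> \<in> {1..card Eb} \<rightarrow>\<^sub>E Eb. bij_betw \<sigma> {1..card Eb} Eb}"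

definition perfect_sim_law :: "'v set \<Rightarrow> ('v \<times> 'v) set \<Rightarrow> (('v \<times> 'v) \<Rightarrow> nat) pmf" where
  "perfect_sim_law B Eb = map_pmf (eta_star B Eb) (pmf_of_set (orderings Eb))"

end

theory Submission
  imports Defs
begin

(* For an ordering sigma of the edges, eta* disagrees at g iff g is a boundary edge or a
   neighbour of g precedes g in sigma. A spike at sigma k acts on this configuration exactly
   like moving sigma k to the front of sigma; as this is a bijection of the orderings, the law
   of eta* is stationary for the jump chain K = (1/m) sum_e H_e, hence invariant.
   Conversely, every invariant law pi satisfies sum_e pi(H_e^-1 A) = m pi(A). If A depends
   only on the internal edges in D, then H_e^-1 A depends only on D - {e} for e in D, and
   only on D otherwise; by induction on D and a maximum principle, two invariant laws
   agree on such events, in particular on singletons. *)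

lemma nbr_sym: "nbr e f = nbr f e"
  unfolding nbr_def by (simp add: Int_commute)

lemma nbr_irrefl: "fst e \<noteq> snd e \<Longrightarrow> \<not> nbr e e"
  unfolding nbr_def by (simp add: card_insert_if)

lemma restrict_comp_in_bijections:
  assumes "bij_betw \<sigma> I A" and "bij_betw p I I"
  shows "restrict (\<sigma> \<circ> p) I \<in> {\<sigma> \<in> I \<rightarrow>\<^sub>E A. bij_betw \<sigma> I A}"
proof -
  have bij: "bij_betw (\<sigma> \<circ> p) I A"
    using assms by (rule bij_betw_trans[rotated])
  then have "bij_betw (restrict (\<sigma> \<circ> p) I) I A"
    by (rule bij_betw_cong[THEN iffD1, rotated]) simp
  moreover have "restrict (\<sigma> \<circ> p) I \<in> I \<rightarrow>\<^sub>E A"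
    using bij_betw_imp_funcset[OF bij] by simp
  ultimately show ?thesis
    by blast
qed

lemma bij_betw_reorder:
  assumes p: "bij_betw p I I"
  shows "bij_betw (\<lambda>\<sigma>. restrict (\<sigma> \<circ> p) I)
           {\<sigma> \<in> I \<rightarrow>\<^sub>E A. bij_betw \<sigma> I A} {\<sigma> \<in> I \<rightarrow>\<^sub>E A. bij_betw \<sigma> I A}"
    (is "bij_betw _ ?O ?O")
proof (rule bij_betw_byWitness[where f' = "\<lambda>\<sigma>. restrict (\<sigma> \<circ> inv_into I p) I"])
  have p': "bij_betw (inv_into I p) I I"
    using p by (rule bij_betw_inv_into)
  show "\<forall>\<sigma> \<in> ?O. restrict (restrict (\<sigma> \<circ> p) I \<circ> inv_into I p) I = \<sigma>"
    using p p' by (auto intro!: extensionalityI[where A = I]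
        simp: PiE_iff bij_betw_apply bij_betw_inv_into_right)
  show "\<forall>\<sigma> \<in> ?O. restrict (restrict (\<sigma> \<circ> inv_into I p) I \<circ> p) I = \<sigma>"
    using p p' by (auto intro!: extensionalityI[where A = I]
        simp: PiE_iff bij_betw_apply bij_betw_inv_into_left)
  show "(\<lambda>\<sigma>. restrict (\<sigma> \<circ> p) I) ` ?O \<subseteq> ?O"
    using p restrict_comp_in_bijections by blast
  show "(\<lambda>\<sigma>. restrict (\<sigma> \<circ> inv_into I p) I) ` ?O \<subseteq> ?O"
    using p' restrict_comp_in_bijections by blast
qed

definition front_perm :: "nat \<Rightarrow> nat \<Rightarrow> nat" where
  "front_perm k i = (if i = 1 then k else if i \<le> k then i - 1 else i)"

definition front_perm_inv :: "nat \<Rightarrow> nat \<Rightarrow> nat" where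
  "front_perm_inv k j = (if j = k then 1 else if j < k then j + 1 else j)"

lemma front_perm_inv_inverse: "1 \<le> k \<Longrightarrow> 1 \<le> j \<Longrightarrow> front_perm k (front_perm_inv k j) = j"
  unfolding front_perm_def front_perm_inv_def by auto

lemma bij_betw_front_perm:
  assumes "k \<in> {1..n}"
  shows "bij_betw (front_perm k) {1..n} {1..n}"
  by (rule bij_betw_byWitness[where f' = "front_perm_inv k"])
     (use assms in \<open>auto simp: front_perm_def front_perm_inv_def\<close>)

lemma vanishes_by_maximum_principle:
  fixes \<delta> :: "'a \<Rightarrow> real" and \<phi> :: "'b \<Rightarrow> 'a \<Rightarrow> 'a"
  assumes "finite F" and "card J < c"
    and maps_to: "\<And>A j. A \<in> F \<Longrightarrow> j \<in> J \<Longrightarrow> \<phi> j A \<in> F"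
    and average: "\<And>A. A \<in> F \<Longrightarrow> c * \<delta> A = (\<Sum>j\<in>J. \<delta> (\<phi> j A))"
    and "A \<in> F"
  shows "\<delta> A = 0"
proof -
  have max: "\<bar>\<delta> A'\<bar> \<le> Max ((\<lambda>A. \<bar>\<delta> A\<bar>) ` F)" if "A' \<in> F" for A'
    using \<open>finite F\<close> that by simp
  have "Max ((\<lambda>A. \<bar>\<delta> A\<bar>) ` F) \<in> (\<lambda>A. \<bar>\<delta> A\<bar>) ` F"
    using \<open>finite F\<close> \<open>A \<in> F\<close> by (intro Max_in) auto
  then obtain A0 where A0: "A0 \<in> F" and A0_max: "\<bar>\<delta> A0\<bar> = Max ((\<lambda>A. \<bar>\<delta> A\<bar>) ` F)"
    by (metis imageE)
  note max = max[folded A0_max]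
  have "c * \<bar>\<delta> A0\<bar> = \<bar>c * \<delta> A0\<bar>"
    by (simp add: abs_mult)
  also have "\<dots> = \<bar>\<Sum>j\<in>J. \<delta> (\<phi> j A0)\<bar>"
    by (simp add: average[OF A0])
  also have "\<dots> \<le> (\<Sum>j\<in>J. \<bar>\<delta> (\<phi> j A0)\<bar>)"
    by (rule sum_abs)
  also have "\<dots> \<le> (\<Sum>j\<in>J. \<bar>\<delta> A0\<bar>)"
    by (intro sum_mono max maps_to A0)
  also have "\<dots> = card J * \<bar>\<delta> A0\<bar>"
    by simp
  finally have "\<not> 0 < \<bar>\<delta> A0\<bar>"
    using \<open>card J < c\<close> by (simp add: mult_le_cancel_right)
  then show ?thesis
    using max[OF \<open>A \<in> F\<close>] by simp
qed

locale spiking_graph =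
  fixes V B :: "'v set" and Eb :: "('v \<times> 'v) set"
  assumes finite_edges: "finite Eb"
    and disjoint: "V \<inter> B = {}"
    and edges_subset: "Eb \<subseteq> V \<times> (V \<union> B)"
    and loop_free: "\<forall>(i, j)\<in>Eb. i \<noteq> j"
begin

section \<open>State space and spikes\<close>

abbreviation "\<E> \<equiv> state_space V B Eb"
abbreviation "bd \<equiv> bdE B Eb"
abbreviation "m \<equiv> card Eb"
abbreviation "H \<equiv> spike V Eb"

lemma not_nbr_self: "e \<in> Eb \<Longrightarrow> \<not> nbr e e"
  using loop_free nbr_irrefl[of e] by (cases e) auto

lemma nbr_imp_neq: "e \<in> Eb \<Longrightarrow> nbr e f \<Longrightarrow> e \<noteq> f"
  using not_nbr_self by metis

lemma bd_subset: "bd \<subseteq> Eb"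
  unfolding bdE_def by auto

lemma internal_iff_not_bd: "e \<in> Eb \<Longrightarrow> snd e \<in> V \<longleftrightarrow> e \<notin> bd"
  using edges_subset disjoint unfolding bdE_def by auto

lemma state_space_iff:
  "\<eta> \<in> \<E> \<longleftrightarrow> (\<forall>e. e \<notin> Eb \<longrightarrow> \<eta> e = 0) \<and> (\<forall>e\<in>Eb. \<eta> e = 0 \<or> \<eta> e = 1)
      \<and> (\<forall>e\<in>bd. \<eta> e = 1) \<and> (\<forall>e\<in>Eb - bd. \<forall>f\<in>Eb - bd. nbr e f \<longrightarrow> \<eta> e + \<eta> f > 0)"
proof -
  have "intE V Eb = Eb - bd"
    using edges_subset disjoint unfolding bdE_def intE_def by auto
  then show ?thesis
    unfolding state_space_def by auto
qed

lemma finite_state_space: "finite \<E>"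
proof -
  have "\<E> \<subseteq> (\<lambda>T e. if e \<in> T then 1 else 0) ` Pow Eb"
  proof
    fix \<eta> assume "\<eta> \<in> \<E>"
    then have "\<eta> = (\<lambda>e. if e \<in> {e \<in> Eb. \<eta> e = 1} then 1 else 0)"
      unfolding state_space_iff by (auto simp: fun_eq_iff)
    then show "\<eta> \<in> (\<lambda>T e. if e \<in> T then 1 else 0) ` Pow Eb"
      by blast
  qed
  then show ?thesis
    using finite_edges by (meson finite_Pow_iff finite_imageI finite_subset)
qed

lemma state_space_eq_if_agree_internal:
  assumes "\<eta> \<in> \<E>" and "\<eta>' \<in> \<E>" and "\<forall>x\<in>Eb - bd. \<eta> x = \<eta>' x"
  shows "\<eta> = \<eta>'"
proof
  fix x
  have "x \<notin> Eb \<or> x \<in> bd \<or> x \<in> Eb - bd"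
    by blast
  then show "\<eta> x = \<eta>' x"
    using assms unfolding state_space_iff by (elim disjE) (auto simp del: split_paired_All)
qed

lemma spike_in_state_space: "\<eta> \<in> \<E> \<Longrightarrow> e \<in> Eb \<Longrightarrow> H e \<eta> \<in> \<E>"
  using not_nbr_self internal_iff_not_bd unfolding state_space_iff spike_def
  by (simp add: nbr_sym)

text \<open>The neighbours of an edge without disagreement disagree, by the constraint defining
  the state space.\<close>
lemma spike_eq_self:
  assumes "\<eta> \<in> \<E>" and "e \<in> Eb" and "\<eta> e = 0"
  shows "H e \<eta> = \<eta>"
proof -
  have "e \<notin> bd"
    using assms unfolding state_space_iff by auto
  have "\<eta> f = 1" if "f \<in> Eb" and "nbr f e" for f
    using assms \<open>e \<notin> bd\<close> that unfolding state_space_iff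
    by (metis DiffI add_0 less_numeral_extra(3) nbr_sym)
  then show ?thesis
    using assms \<open>e \<notin> bd\<close> internal_iff_not_bd unfolding spike_def by (auto simp: fun_eq_iff)
qed

lemma generator_eq_sum_spikes:
  assumes "\<eta> \<in> \<E>"
  shows "generator V Eb f \<eta> = (\<Sum>e\<in>Eb. f (H e \<eta>) - f \<eta>)"
  unfolding generator_def
proof (rule sum.cong[OF refl])
  fix e assume "e \<in> Eb"
  then have "\<eta> e = 0 \<or> \<eta> e = 1"
    using assms unfolding state_space_iff by auto
  then show "real (\<eta> e) * (f (H e \<eta>) - f \<eta>) = f (H e \<eta>) - f \<eta>"
    using spike_eq_self[OF assms \<open>e \<in> Eb\<close>] by auto
qed

section \<open>Closed form of the perfect simulation\<close>

lemma sim_covered_mono: "snd (sim B Eb \<sigma> n) \<subseteq> snd (sim B Eb \<sigma> (n + j))"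
  by (induction j) (auto simp: Let_def)

lemma sim_stable:
  assumes "Eb \<subseteq> snd (sim B Eb \<sigma> n)"
  shows "fst (sim B Eb \<sigma> (n + j)) = fst (sim B Eb \<sigma> n)"
proof (induction j)
  case (Suc j)
  have "Eb \<subseteq> snd (sim B Eb \<sigma> (n + j))"
    using assms sim_covered_mono by blast
  then show ?case
    using Suc by (auto simp: Let_def fun_eq_iff)
qed simp

lemma sim_covered:
  assumes "\<sigma> ` {1..n} \<subseteq> Eb"
  shows "snd (sim B Eb \<sigma> n) = bd \<union> {g \<in> Eb. \<exists>k\<in>{1..n}. \<sigma> k = g \<or> nbr g (\<sigma> k)}"
  using assms
proof (induction n)
  case (Suc n)
  have "{1..Suc n} = insert (Suc n) {1..n}"
    by auto
  with Suc show ?case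
    by (simp add: Let_def) blast
qed (use bd_subset in auto)

definition nbr_before :: "(nat \<Rightarrow> 'v \<times> 'v) \<Rightarrow> nat \<Rightarrow> 'v \<times> 'v \<Rightarrow> bool" where
  "nbr_before \<sigma> n g \<longleftrightarrow> (\<exists>k\<in>{1..n}. nbr g (\<sigma> k) \<and> g \<notin> \<sigma> ` {1..k})"

lemma nbr_before_Suc:
  assumes "g \<in> Eb"
  shows "nbr_before \<sigma> (Suc n) g \<longleftrightarrow>
    nbr_before \<sigma> n g \<or> (\<not> (\<exists>k\<in>{1..n}. \<sigma> k = g \<or> nbr g (\<sigma> k)) \<and> nbr g (\<sigma> (Suc n)))"
proof
  assume "nbr_before \<sigma> (Suc n) g"
  then obtain k where k: "k \<in> {1..Suc n}" "nbr g (\<sigma> k)" "g \<notin> \<sigma> ` {1..k}"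
    unfolding nbr_before_def by blast
  show "nbr_before \<sigma> n g \<or> (\<not> (\<exists>k\<in>{1..n}. \<sigma> k = g \<or> nbr g (\<sigma> k)) \<and> nbr g (\<sigma> (Suc n)))"
  proof (cases "k = Suc n")
    case True
    have "nbr_before \<sigma> n g" if "k0 \<in> {1..n}" and "\<sigma> k0 = g \<or> nbr g (\<sigma> k0)" for k0
    proof -
      have "g \<notin> \<sigma> ` {1..k0}"
        using k True that(1) by auto
      then show ?thesis
        unfolding nbr_before_def using that by auto
    qed
    then show ?thesis
      using k True by blast
  qed (use k in \<open>auto simp: nbr_before_def\<close>)
next
  assume "nbr_before \<sigma> n g \<or> (\<not> (\<exists>k\<in>{1..n}. \<sigma> k = g \<or> nbr g (\<sigma> k)) \<and> nbr g (\<sigma> (Suc n)))"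
  moreover have "g \<noteq> \<sigma> (Suc n)" if "nbr g (\<sigma> (Suc n))"
    using nbr_imp_neq \<open>g \<in> Eb\<close> that by blast
  ultimately show "nbr_before \<sigma> (Suc n) g"
    unfolding nbr_before_def by (force simp: le_Suc_eq)
qed

lemma sim_config:
  assumes "\<sigma> ` {1..n} \<subseteq> Eb"
  shows "fst (sim B Eb \<sigma> n) g = (if g \<in> Eb \<and> (g \<in> bd \<or> nbr_before \<sigma> n g) then 1 else 0)"
  using assms
proof (induction n)
  case (Suc n)
  then have IH_hyp: "\<sigma> ` {1..n} \<subseteq> Eb"
    by auto
  have step: "fst (sim B Eb \<sigma> (Suc n)) g = fst (sim B Eb \<sigma> n) g
      + (if g \<in> Eb \<and> g \<notin> snd (sim B Eb \<sigma> n) \<and> nbr g (\<sigma> (Suc n)) then 1 else 0)"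
    by (simp add: Let_def)
  have "\<exists>k\<in>{1..n}. \<sigma> k = g \<or> nbr g (\<sigma> k)" if "nbr_before \<sigma> n g"
    using that unfolding nbr_before_def by blast
  then show ?case
    unfolding step Suc.IH[OF IH_hyp] sim_covered[OF IH_hyp]
    using bd_subset nbr_before_Suc[of g \<sigma> n] by auto
qed (use bd_subset in \<open>auto simp: nbr_before_def\<close>)

lemma orderings_bij: "\<sigma> \<in> orderings Eb \<Longrightarrow> bij_betw \<sigma> {1..m} Eb"
  unfolding orderings_def by auto

lemma orderings_surj:
  assumes "\<sigma> \<in> orderings Eb" and "g \<in> Eb"
  obtains k where "k \<in> {1..m}" and "\<sigma> k = g"
proof -
  have "g \<in> \<sigma> ` {1..m}"
    using bij_betw_imp_surj_on[OF orderings_bij[OF assms(1)]] assms(2) by simp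
  then show ?thesis
    using that by (auto simp: image_iff)
qed

lemma orderings_inj:
  "\<sigma> \<in> orderings Eb \<Longrightarrow> i \<in> {1..m} \<Longrightarrow> j \<in> {1..m} \<Longrightarrow> \<sigma> i = \<sigma> j \<Longrightarrow> i = j"
  using bij_betw_imp_inj_on[OF orderings_bij] by (rule inj_onD)

lemma orderings_in_edges: "\<sigma> \<in> orderings Eb \<Longrightarrow> k \<in> {1..m} \<Longrightarrow> \<sigma> k \<in> Eb"
  using orderings_bij by (rule bij_betw_apply)

lemma finite_orderings: "finite (orderings Eb)"
proof -
  have "orderings Eb \<subseteq> {1..m} \<rightarrow>\<^sub>E Eb"
    unfolding orderings_def by blast
  moreover have "finite ({1..m} \<rightarrow>\<^sub>E Eb)"
    using finite_edges by (intro finite_PiE) auto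
  ultimately show ?thesis
    by (rule finite_subset)
qed

lemma orderings_nonempty: "orderings Eb \<noteq> {}"
proof -
  obtain h where h: "bij_betw h {1..m} Eb"
    using ex_bij_betw_nat_finite_1[OF finite_edges] by blast
  have "restrict h {1..m} \<in> orderings Eb"
    unfolding orderings_def using restrict_comp_in_bijections[OF h bij_betw_id] by simp
  then show ?thesis
    by blast
qed

definition precedes :: "(nat \<Rightarrow> 'v \<times> 'v) \<Rightarrow> 'v \<times> 'v \<Rightarrow> 'v \<times> 'v \<Rightarrow> bool" where
  "precedes \<sigma> e f \<longleftrightarrow> (\<exists>i\<in>{1..m}. \<exists>j\<in>{1..m}. i < j \<and> \<sigma> i = e \<and> \<sigma> j = f)"

lemma precedes_total:
  assumes \<sigma>: "\<sigma> \<in> orderings Eb" and "e \<in> Eb" and "f \<in> Eb" and "e \<noteq> f"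
  shows "precedes \<sigma> e f \<or> precedes \<sigma> f e"
proof -
  obtain i where i: "i \<in> {1..m}" "\<sigma> i = e"
    by (rule orderings_surj[OF \<sigma> \<open>e \<in> Eb\<close>])
  obtain j where j: "j \<in> {1..m}" "\<sigma> j = f"
    by (rule orderings_surj[OF \<sigma> \<open>f \<in> Eb\<close>])
  note ij = i j
  then have "i \<noteq> j"
    using \<open>e \<noteq> f\<close> by auto
  then have "i < j \<or> j < i"
    by linarith
  with ij show ?thesis
    unfolding precedes_def by blast
qed

definition ordering_config :: "(nat \<Rightarrow> 'v \<times> 'v) \<Rightarrow> 'v \<times> 'v \<Rightarrow> nat" where
  "ordering_config \<sigma> g = (if g \<in> Eb \<and> (g \<in> bd \<or> (\<exists>e. nbr g e \<and> precedes \<sigma> e g)) then 1 else 0)"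

lemma sim_covers_all:
  assumes \<sigma>: "\<sigma> \<in> orderings Eb"
  shows "snd (sim B Eb \<sigma> m) = Eb"
proof -
  have "\<sigma> ` {1..m} \<subseteq> Eb"
    using orderings_in_edges[OF \<sigma>] by blast
  then have "snd (sim B Eb \<sigma> m) = bd \<union> {g \<in> Eb. \<exists>k\<in>{1..m}. \<sigma> k = g \<or> nbr g (\<sigma> k)}"
    by (rule sim_covered)
  also have "{g \<in> Eb. \<exists>k\<in>{1..m}. \<sigma> k = g \<or> nbr g (\<sigma> k)} = Eb"
  proof -
    have "\<exists>k\<in>{1..m}. \<sigma> k = g \<or> nbr g (\<sigma> k)" if "g \<in> Eb" for g
      by (rule orderings_surj[OF \<sigma> that]) auto
    then show ?thesis
      by blast
  qed
  finally show ?thesis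
    using bd_subset by blast
qed

lemma nbr_before_iff_precedes:
  assumes \<sigma>: "\<sigma> \<in> orderings Eb" and "g \<in> Eb"
  shows "nbr_before \<sigma> m g \<longleftrightarrow> (\<exists>e. nbr g e \<and> precedes \<sigma> e g)"
proof
  assume "nbr_before \<sigma> m g"
  then obtain k where k: "k \<in> {1..m}" "nbr g (\<sigma> k)" "g \<notin> \<sigma> ` {1..k}"
    unfolding nbr_before_def by blast
  obtain j where j: "j \<in> {1..m}" "\<sigma> j = g"
    by (rule orderings_surj[OF \<sigma> \<open>g \<in> Eb\<close>])
  have "j \<notin> {1..k}"
    using k(3) j(2) by auto
  then have "k < j"
    using j(1) by auto
  then show "\<exists>e. nbr g e \<and> precedes \<sigma> e g"
    unfolding precedes_def using k j by blast
next
  assume "\<exists>e. nbr g e \<and> precedes \<sigma> e g"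
  then obtain i j where ij: "i \<in> {1..m}" "j \<in> {1..m}" "i < j" "\<sigma> j = g" "nbr g (\<sigma> i)"
    unfolding precedes_def by blast
  have "g \<notin> \<sigma> ` {1..i}"
  proof
    assume "g \<in> \<sigma> ` {1..i}"
    then obtain j' where j': "j' \<in> {1..i}" "\<sigma> j' = g"
      by blast
    then have "j' = j"
      using orderings_inj[OF \<sigma>, of j' j] ij by auto
    then show False
      using j' ij by auto
  qed
  then show "nbr_before \<sigma> m g"
    unfolding nbr_before_def using ij by blast
qed

lemma eta_star_eq_ordering_config:
  assumes \<sigma>: "\<sigma> \<in> orderings Eb"
  shows "eta_star B Eb \<sigma> = ordering_config \<sigma>"
proof -
  define L where "L = (LEAST n. snd (sim B Eb \<sigma> n) = Eb)"
  have "snd (sim B Eb \<sigma> L) = Eb" and "L \<le> m"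
    unfolding L_def using sim_covers_all[OF \<sigma>] by (rule LeastI, rule Least_le)
  then have "fst (sim B Eb \<sigma> m) = fst (sim B Eb \<sigma> L)"
    using sim_stable[of \<sigma> L "m - L"] by simp
  then have "eta_star B Eb \<sigma> = fst (sim B Eb \<sigma> m)"
    unfolding eta_star_def L_def by simp
  also have "\<dots> = ordering_config \<sigma>"
  proof
    fix g
    have range: "\<sigma> ` {1..m} \<subseteq> Eb"
      using orderings_in_edges[OF \<sigma>] by blast
    show "fst (sim B Eb \<sigma> m) g = ordering_config \<sigma> g"
      unfolding sim_config[OF range] ordering_config_def using nbr_before_iff_precedes[OF \<sigma>, of g]
      by (cases "g \<in> Eb") (simp_all del: split_paired_Ex split_paired_All)
  qed
  finally show ?thesis .
qed

lemma ordering_config_in_state_space: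
  assumes \<sigma>: "\<sigma> \<in> orderings Eb"
  shows "ordering_config \<sigma> \<in> \<E>"
proof -
  have "0 < ordering_config \<sigma> e + ordering_config \<sigma> f"
    if e: "e \<in> Eb - bd" and f: "f \<in> Eb - bd" and ef: "nbr e f" for e f
  proof -
    have "e \<noteq> f"
      using e ef nbr_imp_neq by blast
    then consider "precedes \<sigma> e f" | "precedes \<sigma> f e"
      using e f precedes_total[OF \<sigma>, of e f] by blast
    then have "(\<exists>e'. nbr f e' \<and> precedes \<sigma> e' f) \<or> (\<exists>f'. nbr e f' \<and> precedes \<sigma> f' e)"
      using ef nbr_sym[of e f] by cases blast+
    then show ?thesis
      using e f unfolding ordering_config_def by auto
  qed
  then show ?thesis
    unfolding state_space_iff using bd_subset by (auto simp: ordering_config_def)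
qed

section \<open>Invariance\<close>

definition move_to_front :: "nat \<Rightarrow> (nat \<Rightarrow> 'v \<times> 'v) \<Rightarrow> nat \<Rightarrow> 'v \<times> 'v" where
  "move_to_front k \<sigma> = restrict (\<sigma> \<circ> front_perm k) {1..m}"

lemma bij_betw_move_to_front:
  "k \<in> {1..m} \<Longrightarrow> bij_betw (move_to_front k) (orderings Eb) (orderings Eb)"
  unfolding move_to_front_def orderings_def by (intro bij_betw_reorder bij_betw_front_perm)

lemma move_to_front_apply: "i \<in> {1..m} \<Longrightarrow> move_to_front k \<sigma> i = \<sigma> (front_perm k i)"
  unfolding move_to_front_def by simp

lemma precedes_move_to_frontD:
  assumes \<sigma>: "\<sigma> \<in> orderings Eb" and k: "k \<in> {1..m}"
    and "precedes (move_to_front k \<sigma>) x y"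
  shows "(x = \<sigma> k \<and> y \<in> Eb \<and> y \<noteq> \<sigma> k) \<or> (x \<noteq> \<sigma> k \<and> y \<noteq> \<sigma> k \<and> precedes \<sigma> x y)"
proof -
  have fp: "front_perm k i \<in> {1..m}" if "i \<in> {1..m}" for i
    using bij_betw_apply[OF bij_betw_front_perm[OF k] that] .
  obtain i j where ij: "i \<in> {1..m}" "j \<in> {1..m}" "i < j"
      and x: "x = \<sigma> (front_perm k i)" and y: "y = \<sigma> (front_perm k j)"
    using assms(3) move_to_front_apply unfolding precedes_def by auto
  have "front_perm k j \<noteq> k"
    using ij unfolding front_perm_def by auto
  then have "y \<noteq> \<sigma> k"
    using orderings_inj[OF \<sigma> fp[OF ij(2)] k] y by auto
  moreover have "y \<in> Eb"
    using orderings_in_edges[OF \<sigma> fp[OF ij(2)]] y by simp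
  moreover have "x \<noteq> \<sigma> k \<and> precedes \<sigma> x y" if "i \<noteq> 1"
  proof
    have "front_perm k i \<noteq> k"
      using ij that unfolding front_perm_def by auto
    then show "x \<noteq> \<sigma> k"
      using orderings_inj[OF \<sigma> fp[OF ij(1)] k] x by auto
    have "front_perm k i < front_perm k j"
      using ij that unfolding front_perm_def by auto
    then show "precedes \<sigma> x y"
      unfolding precedes_def using fp ij x y by blast
  qed
  moreover have "x = \<sigma> k" if "i = 1"
    using x that unfolding front_perm_def by simp
  ultimately show ?thesis
    by blast
qed

lemma precedes_move_to_frontI:
  assumes \<sigma>: "\<sigma> \<in> orderings Eb" and k: "k \<in> {1..m}"
    and "(x = \<sigma> k \<and> y \<in> Eb \<and> y \<noteq> \<sigma> k) \<or> (x \<noteq> \<sigma> k \<and> y \<noteq> \<sigma> k \<and> precedes \<sigma> x y)"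
  shows "precedes (move_to_front k \<sigma>) x y"
proof -
  have fpi: "front_perm_inv k i \<in> {1..m}" "front_perm k (front_perm_inv k i) = i"
    if "i \<in> {1..m}" for i
    using that k front_perm_inv_inverse[of k i] unfolding front_perm_inv_def by auto
  obtain i j where ij: "i \<in> {1..m}" "j \<in> {1..m}" "i < j"
      and x: "\<sigma> (front_perm k i) = x" and y: "\<sigma> (front_perm k j) = y"
    using assms(3)
  proof (elim disjE conjE)
    assume "x = \<sigma> k" "y \<in> Eb" "y \<noteq> \<sigma> k"
    moreover obtain j where j: "j \<in> {1..m}" "\<sigma> j = y"
      by (rule orderings_surj[OF \<sigma> \<open>y \<in> Eb\<close>])
    moreover have "1 < front_perm_inv k j"
      using j k \<open>y \<noteq> \<sigma> k\<close> unfolding front_perm_inv_def by auto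
    moreover have "front_perm k 1 = k"
      unfolding front_perm_def by simp
    ultimately show thesis
      using that[of 1 "front_perm_inv k j"] fpi[OF j(1)] k by auto
  next
    assume "x \<noteq> \<sigma> k" "y \<noteq> \<sigma> k" "precedes \<sigma> x y"
    then obtain i j where ij: "i \<in> {1..m}" "j \<in> {1..m}" "i < j" "\<sigma> i = x" "\<sigma> j = y"
        "i \<noteq> k" "j \<noteq> k"
      unfolding precedes_def by blast
    then have "front_perm_inv k i < front_perm_inv k j"
      unfolding front_perm_inv_def by auto
    then show thesis
      using that[of "front_perm_inv k i" "front_perm_inv k j"] fpi[OF ij(1)] fpi[OF ij(2)] ij
      by auto
  qed
  then show ?thesis
    unfolding precedes_def using ij move_to_front_apply[OF ij(1)] move_to_front_apply[OF ij(2)]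
    by blast
qed

lemma precedes_move_to_front:
  assumes "\<sigma> \<in> orderings Eb" and "k \<in> {1..m}"
  shows "precedes (move_to_front k \<sigma>) x y \<longleftrightarrow>
    (x = \<sigma> k \<and> y \<in> Eb \<and> y \<noteq> \<sigma> k) \<or> (x \<noteq> \<sigma> k \<and> y \<noteq> \<sigma> k \<and> precedes \<sigma> x y)"
  using precedes_move_to_frontD[OF assms] precedes_move_to_frontI[OF assms] by blast

lemma spike_ordering_config:
  assumes \<sigma>: "\<sigma> \<in> orderings Eb" and k: "k \<in> {1..m}"
  shows "H (\<sigma> k) (ordering_config \<sigma>) = ordering_config (move_to_front k \<sigma>)"
proof
  fix g
  have e: "\<sigma> k \<in> Eb"
    using bij_betw_apply[OF orderings_bij[OF \<sigma>] k] .
  show "H (\<sigma> k) (ordering_config \<sigma>) g = ordering_config (move_to_front k \<sigma>) g"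
    using not_nbr_self[OF e] internal_iff_not_bd[OF e] nbr_imp_neq[of g "\<sigma> k"]
    unfolding spike_def ordering_config_def precedes_move_to_front[OF \<sigma> k]
    by (auto simp del: split_paired_Ex split_paired_All)
qed

lemma sum_spikes_ordering_config:
  fixes F :: "(('v \<times> 'v) \<Rightarrow> nat) \<Rightarrow> 'a::comm_semiring_1"
  shows "(\<Sum>\<sigma>\<in>orderings Eb. \<Sum>e\<in>Eb. F (H e (ordering_config \<sigma>)))
     = of_nat m * (\<Sum>\<sigma>\<in>orderings Eb. F (ordering_config \<sigma>))"
proof -
  have "(\<Sum>e\<in>Eb. F (H e (ordering_config \<sigma>))) = (\<Sum>k\<in>{1..m}. F (ordering_config (move_to_front k \<sigma>)))"
    if \<sigma>: "\<sigma> \<in> orderings Eb" for \<sigma>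
    using sum.reindex_bij_betw[OF orderings_bij[OF \<sigma>], of "\<lambda>e. F (H e (ordering_config \<sigma>))"]
    by (simp add: spike_ordering_config[OF \<sigma>])
  then have "(\<Sum>\<sigma>\<in>orderings Eb. \<Sum>e\<in>Eb. F (H e (ordering_config \<sigma>)))
      = (\<Sum>\<sigma>\<in>orderings Eb. \<Sum>k\<in>{1..m}. F (ordering_config (move_to_front k \<sigma>)))"
    by (rule sum.cong[OF refl])
  also have "\<dots> = (\<Sum>k\<in>{1..m}. \<Sum>\<sigma>\<in>orderings Eb. F (ordering_config (move_to_front k \<sigma>)))"
    by (rule sum.swap)
  also have "\<dots> = (\<Sum>k\<in>{1..m}. \<Sum>\<sigma>\<in>orderings Eb. F (ordering_config \<sigma>))"
  proof (rule sum.cong[OF refl])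
    fix k assume "k \<in> {1..m}"
    show "(\<Sum>\<sigma>\<in>orderings Eb. F (ordering_config (move_to_front k \<sigma>)))
        = (\<Sum>\<sigma>\<in>orderings Eb. F (ordering_config \<sigma>))"
      using sum.reindex_bij_betw[OF bij_betw_move_to_front[OF \<open>k \<in> {1..m}\<close>],
          of "\<lambda>\<sigma>. F (ordering_config \<sigma>)"] by simp
  qed
  finally show ?thesis
    by simp
qed

lemma invariant_perfect_sim_law: "invariant_measure V B Eb (perfect_sim_law B Eb)"
  unfolding invariant_measure_def
proof (intro conjI allI)
  show "set_pmf (perfect_sim_law B Eb) \<subseteq> \<E>"
    unfolding perfect_sim_law_def
    using finite_orderings orderings_nonempty eta_star_eq_ordering_config ordering_config_in_state_space
    by auto
  fix f :: "(('v \<times> 'v) \<Rightarrow> nat) \<Rightarrow> real"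
  have "(\<Sum>\<sigma>\<in>orderings Eb. generator V Eb f (eta_star B Eb \<sigma>))
      = (\<Sum>\<sigma>\<in>orderings Eb. (\<Sum>e\<in>Eb. f (H e (ordering_config \<sigma>))) - m * f (ordering_config \<sigma>))"
    by (rule sum.cong[OF refl])
       (simp add: eta_star_eq_ordering_config generator_eq_sum_spikes ordering_config_in_state_space sum_subtractf)
  also have "\<dots> = 0"
    by (simp add: sum_subtractf sum_spikes_ordering_config flip: sum_distrib_left)
  finally show "measure_pmf.expectation (perfect_sim_law B Eb) (generator V Eb f) = 0"
    unfolding perfect_sim_law_def using finite_orderings orderings_nonempty
    by (simp add: integral_pmf_of_set)
qed

section \<open>Uniqueness\<close>

lemma invariant_measure_support: "invariant_measure V B Eb p \<Longrightarrow> set_pmf p \<subseteq> \<E>"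
  unfolding invariant_measure_def by blast

lemma prob_state_space: "invariant_measure V B Eb p \<Longrightarrow> measure_pmf.prob p \<E> = 1"
  using invariant_measure_support finite_state_space
  by (simp add: measure_measure_pmf_finite sum_pmf_eq_1)

lemma expectation_eq_sum:
  "set_pmf p \<subseteq> \<E> \<Longrightarrow> measure_pmf.expectation p f = (\<Sum>\<eta>\<in>\<E>. f \<eta> * pmf p \<eta>)"
  using finite_state_space by (intro integral_measure_pmf_real) auto

lemma prob_eq_sum:
  "set_pmf p \<subseteq> \<E> \<Longrightarrow> measure_pmf.prob p A = (\<Sum>\<eta>\<in>\<E>. indicator A \<eta> * pmf p \<eta>)"
  using expectation_eq_sum[of p "indicator A"] by simp

text \<open>This is the stationarity pi K = pi of the jump chain K = (1/m) sum_e H_e.\<close>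
lemma invariant_balance:
  assumes "invariant_measure V B Eb p"
  shows "(\<Sum>e\<in>Eb. measure_pmf.prob p {\<eta> \<in> \<E>. H e \<eta> \<in> A}) = m * measure_pmf.prob p A"
proof -
  have p: "set_pmf p \<subseteq> \<E>"
    using assms by (rule invariant_measure_support)
  have "0 = measure_pmf.expectation p (generator V Eb (indicator A))"
    using assms unfolding invariant_measure_def by simp
  also have "\<dots> = (\<Sum>\<eta>\<in>\<E>. (\<Sum>e\<in>Eb. indicator {\<eta> \<in> \<E>. H e \<eta> \<in> A} \<eta> * pmf p \<eta>)
      - m * (indicator A \<eta> * pmf p \<eta>))"
    unfolding expectation_eq_sum[OF p]
    by (intro sum.cong refl)
       (simp add: generator_eq_sum_spikes sum_subtractf sum_distrib_right left_diff_distrib indicator_def)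
  also have "\<dots> = (\<Sum>e\<in>Eb. \<Sum>\<eta>\<in>\<E>. indicator {\<eta> \<in> \<E>. H e \<eta> \<in> A} \<eta> * pmf p \<eta>)
      - m * (\<Sum>\<eta>\<in>\<E>. indicator A \<eta> * pmf p \<eta>)"
    by (simp only: sum_subtractf sum.swap[of _ \<E> Eb] sum_distrib_left)
  finally show ?thesis
    unfolding prob_eq_sum[OF p] by simp
qed

definition depends_only_on :: "('v \<times> 'v) set \<Rightarrow> (('v \<times> 'v) \<Rightarrow> nat) set \<Rightarrow> bool" where
  "depends_only_on D A \<longleftrightarrow> (\<forall>\<eta>\<in>\<E>. \<forall>\<eta>'\<in>\<E>. (\<forall>x\<in>D. \<eta> x = \<eta>' x) \<longrightarrow> (\<eta> \<in> A \<longleftrightarrow> \<eta>' \<in> A))"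

lemma depends_only_on_spike_preimage:
  assumes "depends_only_on D A" and "e \<in> Eb"
  shows "depends_only_on D {\<eta> \<in> \<E>. H e \<eta> \<in> A}"
  unfolding depends_only_on_def
proof (intro ballI impI)
  fix \<eta> \<eta>' assume "\<eta> \<in> \<E>" "\<eta>' \<in> \<E>" "\<forall>x\<in>D. \<eta> x = \<eta>' x"
  moreover have "\<forall>x\<in>D. H e \<eta> x = H e \<eta>' x"
    using \<open>\<forall>x\<in>D. \<eta> x = \<eta>' x\<close> unfolding spike_def by auto
  ultimately show "\<eta> \<in> {\<eta> \<in> \<E>. H e \<eta> \<in> A} \<longleftrightarrow> \<eta>' \<in> {\<eta> \<in> \<E>. H e \<eta> \<in> A}"
    using assms spike_in_state_space unfolding depends_only_on_def by blast
qed

text \<open>A spike at an internal edge erases the information held at that edge.\<close>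
lemma depends_only_on_spike_preimage_Diff:
  assumes "depends_only_on D A" and "e \<in> Eb - bd"
  shows "depends_only_on (D - {e}) {\<eta> \<in> \<E>. H e \<eta> \<in> A}"
  unfolding depends_only_on_def
proof (intro ballI impI)
  fix \<eta> \<eta>' assume "\<eta> \<in> \<E>" "\<eta>' \<in> \<E>" "\<forall>x\<in>D - {e}. \<eta> x = \<eta>' x"
  moreover have "\<forall>x\<in>D. H e \<eta> x = H e \<eta>' x"
    using \<open>\<forall>x\<in>D - {e}. \<eta> x = \<eta>' x\<close> assms(2) internal_iff_not_bd unfolding spike_def by auto
  ultimately show "\<eta> \<in> {\<eta> \<in> \<E>. H e \<eta> \<in> A} \<longleftrightarrow> \<eta>' \<in> {\<eta> \<in> \<E>. H e \<eta> \<in> A}"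
    using assms spike_in_state_space unfolding depends_only_on_def by blast
qed

lemma depends_only_on_empty: "A \<subseteq> \<E> \<Longrightarrow> depends_only_on {} A \<Longrightarrow> A = {} \<or> A = \<E>"
  unfolding depends_only_on_def by blast

lemma invariant_measures_agree_on_local_events:
  assumes p: "invariant_measure V B Eb p" and q: "invariant_measure V B Eb q"
    and "D \<subseteq> Eb - bd" and "A \<subseteq> \<E>" and "depends_only_on D A"
  shows "measure_pmf.prob p A = measure_pmf.prob q A"
proof -
  have "finite D"
    using \<open>D \<subseteq> Eb - bd\<close> finite_edges finite_subset by blast
  then show ?thesis
    using assms(3-)
  proof (induction D arbitrary: A rule: finite_psubset_induct)
    case (psubset D)
    define \<delta> where "\<delta> A = measure_pmf.prob p A - measure_pmf.prob q A" for A
    define \<phi> where "\<phi> e A = {\<eta> \<in> \<E>. H e \<eta> \<in> A}" for e A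
    show ?case
    proof (cases "D = {}")
      case True
      then have "A = {} \<or> A = \<E>"
        using depends_only_on_empty psubset.prems by blast
      then show ?thesis
        using prob_state_space[OF p] prob_state_space[OF q] by auto
    next
      case False
      have "\<delta> A = 0"
      proof (rule vanishes_by_maximum_principle[where F = "{A. A \<subseteq> \<E> \<and> depends_only_on D A}"])
        show "finite {A. A \<subseteq> \<E> \<and> depends_only_on D A}"
          using finite_state_space by simp
        show "card (Eb - D) < m"
          using False psubset.prems(1) by (intro psubset_card_mono finite_edges) auto
        fix A' assume A': "A' \<in> {A. A \<subseteq> \<E> \<and> depends_only_on D A}"
        then show "\<phi> e A' \<in> {A. A \<subseteq> \<E> \<and> depends_only_on D A}" if "e \<in> Eb - D" for e
          using that depends_only_on_spike_preimage unfolding \<phi>_def by auto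
        have "measure_pmf.prob p (\<phi> e A') = measure_pmf.prob q (\<phi> e A')" if "e \<in> D" for e
          unfolding \<phi>_def using that A' psubset.prems(1)
          by (intro psubset.IH[of "D - {e}"] depends_only_on_spike_preimage_Diff) auto
        then have "(\<Sum>e\<in>Eb. \<delta> (\<phi> e A')) = (\<Sum>e\<in>Eb - D. \<delta> (\<phi> e A'))"
          unfolding \<delta>_def using psubset.prems(1) finite_edges by (intro sum.mono_neutral_right) auto
        moreover have "(\<Sum>e\<in>Eb. \<delta> (\<phi> e A')) = m * \<delta> A'"
          using invariant_balance[OF p] invariant_balance[OF q]
          unfolding \<delta>_def \<phi>_def by (simp add: sum_subtractf right_diff_distrib)
        ultimately show "real m * \<delta> A' = (\<Sum>e\<in>Eb - D. \<delta> (\<phi> e A'))"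
          by simp
      qed (use psubset.prems in auto)
      then show ?thesis
        unfolding \<delta>_def by simp
    qed
  qed
qed

lemma invariant_measure_unique:
  assumes p: "invariant_measure V B Eb p" and q: "invariant_measure V B Eb q"
  shows "p = q"
proof (rule pmf_eqI)
  fix \<eta>0
  show "pmf p \<eta>0 = pmf q \<eta>0"
  proof (cases "\<eta>0 \<in> \<E>")
    case True
    have "depends_only_on (Eb - bd) {\<eta>0}"
      unfolding depends_only_on_def
    proof (intro ballI impI)
      fix \<eta> \<eta>' assume "\<eta> \<in> \<E>" "\<eta>' \<in> \<E>" "\<forall>x\<in>Eb - bd. \<eta> x = \<eta>' x"
      then have "\<eta> = \<eta>'"
        by (rule state_space_eq_if_agree_internal)
      then show "\<eta> \<in> {\<eta>0} \<longleftrightarrow> \<eta>' \<in> {\<eta>0}"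
        by simp
    qed
    then show ?thesis
      using invariant_measures_agree_on_local_events[OF p q, of "Eb - bd" "{\<eta>0}"] True
      by (simp add: measure_pmf_single)
  next
    case False
    then show ?thesis
      using invariant_measure_support[OF p] invariant_measure_support[OF q]
      by (metis pmf_eq_0_set_pmf subsetD)
  qed
qed

end

theorem mainTheorem9:
  fixes V B :: "'v set" and Eb :: "('v \<times> 'v) set"
  assumes "finite V" and "finite B" and "V \<inter> B = {}"
    and "Eb \<subseteq> V \<times> (V \<union> B)"
    and "\<forall>(i, j)\<in>Eb. i \<noteq> j"
    and "\<forall>(i, j)\<in>Eb. (j, i) \<notin> Eb"
    and "graph_connected (V \<union> B) Eb"
  shows "invariant_measure V B Eb (perfect_sim_law B Eb)
    \<and> (\<forall>p. invariant_measure V B Eb p \<longrightarrow> p = perfect_sim_law B Eb)"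
proof -
  have "finite Eb"
    using assms(1,2,4) by (meson finite_SigmaI finite_Un finite_subset)
  then interpret spiking_graph V B Eb
    using assms(3-5) by unfold_locales
  show ?thesis
    using invariant_perfect_sim_law invariant_measure_unique by blast
qed

end
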